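(* Let $T$ be a labeled tree with an even number of vertices whose bipartition $V(T)=A\sqcup B$ into two independent sets satisfies $|A|\ne|B|$. Then $X(T;\mathbf{x},q)$ is not palindromic; in particular it is not symmetric.
   Context: A labeled graph is a finite simple graph with vertex set $[n]$. A proper coloring is $c\colon[n]\to\{1,2,\dots\}$ with adjacent vertices colored differently; $\operatorname{asc}(c)=\#\{ij\in E: i<j,\ c(i)<c(j)\}$. The CQF is $X(G;\mathbf{x},q)=\sum_{c \text{ proper}} x_{c(1)}\cdots x_{c(n)}q^{\operatorname{asc}(c)}$. It is symmetric if each coefficient of $q^k$ is a symmetric function, and palindromic if, with $m=|E|$, the coefficient of $q^k$ equals that of $q^{m-k}$ for all $k$. *)

theory Defs
  imports Main "HOL-Library.FuncSet"
begin

definition simple_graph :: "nat \<Rightarrow> nat set set \<Rightarrow> bool" where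
  "simple_graph n E \<longleftrightarrow>
     (\<forall>e\<in>E. \<exists>i j. e = {i, j} \<and> i \<noteq> j \<and> i \<in> {1..n} \<and> j \<in> {1..n})"

definition adj :: "nat set set \<Rightarrow> nat \<Rightarrow> nat \<Rightarrow> bool" where
  "adj E i j \<longleftrightarrow> i \<noteq> j \<and> {i, j} \<in> E"

definition graph_connected :: "nat \<Rightarrow> nat set set \<Rightarrow> bool" where
  "graph_connected n E \<longleftrightarrow>
     (\<forall>i\<in>{1..n}. \<forall>j\<in>{1..n}. (i, j) \<in> {(a, b). adj E a b}\<^sup>*)"

definition has_cycle :: "nat \<Rightarrow> nat set set \<Rightarrow> bool" where
  "has_cycle n E \<longleftrightarrow>
     (\<exists>vs. length vs \<ge> 3 \<and> distinct vs \<and> set vs \<subseteq> {1..n} \<and>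
        (\<forall>i. i + 1 < length vs \<longrightarrow> adj E (vs ! i) (vs ! (i + 1))) \<and>
        adj E (last vs) (hd vs))"

definition is_tree :: "nat \<Rightarrow> nat set set \<Rightarrow> bool" where
  "is_tree n E \<longleftrightarrow> simple_graph n E \<and> n \<ge> 1 \<and> graph_connected n E \<and> \<not> has_cycle n E"

definition independent_set :: "nat set set \<Rightarrow> nat set \<Rightarrow> bool" where
  "independent_set E S \<longleftrightarrow> (\<forall>i\<in>S. \<forall>j\<in>S. \<not> adj E i j)"

definition proper_coloring :: "nat \<Rightarrow> nat set set \<Rightarrow> (nat \<Rightarrow> nat) \<Rightarrow> bool" where
  "proper_coloring n E c \<longleftrightarrow>
     c \<in> {1..n} \<rightarrow>\<^sub>E {1..} \<and> (\<forall>i j. adj E i j \<longrightarrow> c i \<noteq> c j)"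

definition asc :: "nat set set \<Rightarrow> (nat \<Rightarrow> nat) \<Rightarrow> nat" where
  "asc E c = card {(i, j). {i, j} \<in> E \<and> i < j \<and> c i < c j}"

text \<open>Exponent of x_a in the monomial x_{c(1)}...x_{c(n)}.\<close>
definition content :: "nat \<Rightarrow> (nat \<Rightarrow> nat) \<Rightarrow> nat \<Rightarrow> nat" where
  "content n c a = card {i \<in> {1..n}. c i = a}"

text \<open>Coefficient of q^k x^\<alpha> in X(G;x,q), where \<alpha> gives the exponent of each variable x_a (a \<ge> 1).\<close>
definition cqf_coeff :: "nat \<Rightarrow> nat set set \<Rightarrow> nat \<Rightarrow> (nat \<Rightarrow> nat) \<Rightarrow> nat" where
  "cqf_coeff n E k \<alpha> =
     card {c. proper_coloring n E c \<and> asc E c = k \<and> content n c = \<alpha>}"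

text \<open>Each coefficient of q^k is a symmetric function: invariant under any permutation of the variables x_1, x_2, ...\<close>
definition cqf_symmetric :: "nat \<Rightarrow> nat set set \<Rightarrow> bool" where
  "cqf_symmetric n E \<longleftrightarrow>
     (\<forall>k \<alpha> \<sigma>. bij \<sigma> \<and> \<sigma> 0 = 0 \<longrightarrow> cqf_coeff n E k (\<alpha> \<circ> \<sigma>) = cqf_coeff n E k \<alpha>)"

definition cqf_palindromic :: "nat \<Rightarrow> nat set set \<Rightarrow> bool" where
  "cqf_palindromic n E \<longleftrightarrow>
     (\<forall>k \<le> card E. \<forall>\<alpha>. cqf_coeff n E k \<alpha> = cqf_coeff n E (card E - k) \<alpha>)"

end

theory Submission
  imports Defs "HOL-Combinatorics.Transposition"
begin

text \<open>Let c colour A with 1 and B with 2, and let c' be the colouring with the colours swapped.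
  In a connected graph a proper colouring with colours 1 and 2 is determined by its colour at one
  vertex, so c and c' are the only proper colourings with these two colours. As |A| \<noteq> |B|,
  c is the only proper colouring of its content, so the coefficient of that monomial in X(T; x, q)
  is the single power q^asc(c); likewise for c'. Every edge is an ascent of exactly one of c and c',
  so asc(c) + asc(c') = m = n - 1, which is odd. Palindromicity would force asc(c) = m - asc(c), and
  symmetry under exchanging x_1 and x_2 would force asc(c) = asc(c') = m - asc(c).\<close>

section \<open>Leaves and the edge count of trees\<close>

definition graph_on :: "nat set \<Rightarrow> nat set set \<Rightarrow> bool" where
  "graph_on V E \<longleftrightarrow> (\<forall>e\<in>E. \<exists>i j. e = {i, j} \<and> i \<noteq> j \<and> i \<in> V \<and> j \<in> V)"

definition connected_on :: "nat set \<Rightarrow> nat set set \<Rightarrow> bool" where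
  "connected_on V E \<longleftrightarrow> (\<forall>i\<in>V. \<forall>j\<in>V. (i, j) \<in> {(a, b). adj E a b}\<^sup>*)"

definition is_path :: "nat set set \<Rightarrow> nat list \<Rightarrow> bool" where
  "is_path E vs \<longleftrightarrow> distinct vs \<and> (\<forall>i. i + 1 < length vs \<longrightarrow> adj E (vs ! i) (vs ! (i + 1)))"

definition has_cycle_on :: "nat set \<Rightarrow> nat set set \<Rightarrow> bool" where
  "has_cycle_on V E \<longleftrightarrow>
     (\<exists>vs. length vs \<ge> 3 \<and> is_path E vs \<and> set vs \<subseteq> V \<and> adj E (last vs) (hd vs))"

lemma simple_graph_iff_graph_on: "simple_graph n E \<longleftrightarrow> graph_on {1..n} E"
  unfolding simple_graph_def graph_on_def ..

lemma graph_connected_iff_connected_on: "graph_connected n E \<longleftrightarrow> connected_on {1..n} E"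
  unfolding graph_connected_def connected_on_def ..

lemma has_cycle_iff_has_cycle_on: "has_cycle n E \<longleftrightarrow> has_cycle_on {1..n} E"
  unfolding has_cycle_def has_cycle_on_def is_path_def by blast

lemma adj_sym: "adj E a b \<Longrightarrow> adj E b a"
  unfolding adj_def by (auto simp: insert_commute)

lemma adj_mono: "adj E' a b \<Longrightarrow> E' \<subseteq> E \<Longrightarrow> adj E a b"
  unfolding adj_def by auto

lemma graph_on_adjD: "graph_on V E \<Longrightarrow> adj E a b \<Longrightarrow> a \<in> V \<and> b \<in> V"
  unfolding graph_on_def adj_def by (fastforce simp: doubleton_eq_iff)

lemma is_path_length_le_card:
  assumes "is_path E vs" "set vs \<subseteq> V" "finite V"
  shows "length vs \<le> card V"
  using assms card_mono distinct_card unfolding is_path_def by metis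

lemma is_path_snoc:
  assumes "is_path E vs" "vs \<noteq> []" "adj E (last vs) w" "w \<notin> set vs"
  shows "is_path E (vs @ [w])"
  unfolding is_path_def
proof (intro conjI allI impI)
  show "distinct (vs @ [w])" using assms(1,4) unfolding is_path_def by simp
  fix i assume i: "i + 1 < length (vs @ [w])"
  show "adj E ((vs @ [w]) ! i) ((vs @ [w]) ! (i + 1))"
  proof (cases "i + 1 < length vs")
    case True
    then show ?thesis using assms(1) unfolding is_path_def by (simp add: nth_append)
  next
    case False
    then have "i + 1 = length vs" using i by simp
    then have "last vs = vs ! i"
      using assms(2) by (metis add_diff_cancel_right' last_conv_nth)
    moreover have "(vs @ [w]) ! i = vs ! i"
      using \<open>i + 1 = length vs\<close> by (intro nth_append_left) linarith
    moreover have "(vs @ [w]) ! (i + 1) = w"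
      using \<open>i + 1 = length vs\<close> by (metis nth_append_length)
    ultimately show ?thesis using assms(3) by simp
  qed
qed

lemma is_path_drop: "is_path E vs \<Longrightarrow> is_path E (drop i vs)"
  unfolding is_path_def by (simp add: add.assoc)

lemma has_cycle_on_mono:
  "has_cycle_on V' E' \<Longrightarrow> V' \<subseteq> V \<Longrightarrow> E' \<subseteq> E \<Longrightarrow> has_cycle_on V E"
  unfolding has_cycle_on_def is_path_def by (meson adj_mono order_trans)

text \<open>A neighbour of the endpoint off the path would extend the path, and a neighbour on the path
  other than its predecessor would close a cycle.\<close>
lemma longest_path_last_adj:
  assumes "graph_on V E" "\<not> has_cycle_on V E"
    and ps: "is_path E ps" "set ps \<subseteq> V" "length ps \<ge> 2"
    and longest: "\<And>vs. is_path E vs \<Longrightarrow> set vs \<subseteq> V \<Longrightarrow> length vs \<le> length ps"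
    and w: "adj E (last ps) w"
  shows "w = ps ! (length ps - 2)"
proof (cases "w \<in> set ps")
  case False
  have "ps \<noteq> []" using ps(3) by auto
  then have "is_path E (ps @ [w])" using is_path_snoc ps(1) w False by blast
  moreover have "set (ps @ [w]) \<subseteq> V" using ps(2) graph_on_adjD[OF assms(1) w] by simp
  ultimately have "length (ps @ [w]) \<le> length ps" using longest by blast
  then show ?thesis by simp
next
  case True
  then obtain i where i: "i < length ps" "ps ! i = w" by (auto simp: in_set_conv_nth)
  have "ps \<noteq> []" using ps(3) by auto
  then have "ps ! (length ps - 1) = last ps" by (simp add: last_conv_nth)
  moreover have "w \<noteq> last ps" using w unfolding adj_def by auto
  ultimately have "i \<noteq> length ps - 1" using i by auto
  show ?thesis
  proof (rule ccontr)
    assume "w \<noteq> ps ! (length ps - 2)"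
    then have "i \<noteq> length ps - 2" using i(2) by blast
    then have "i + 3 \<le> length ps" using i(1) \<open>i \<noteq> length ps - 1\<close> by linarith
    moreover have "set (drop i ps) \<subseteq> V" using ps(2) by (meson set_drop_subset order_trans)
    moreover have "adj E (last (drop i ps)) (hd (drop i ps))"
      using w i by (simp add: hd_drop_conv_nth)
    ultimately have "has_cycle_on V E"
      unfolding has_cycle_on_def using is_path_drop[OF ps(1)]
      by (intro exI[of _ "drop i ps"]) simp
    then show False using assms(2) by simp
  qed
qed

lemma acyclic_has_leaf:
  assumes "finite V" "graph_on V E" "E \<noteq> {}" "\<not> has_cycle_on V E"
  obtains v u where "adj E v u" "\<And>w. adj E v w \<Longrightarrow> w = u"
proof -
  let ?P = "\<lambda>vs. is_path E vs \<and> set vs \<subseteq> V"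
  obtain e where "e \<in> E" using assms(3) by blast
  then obtain a b where "{a, b} \<in> E" "a \<noteq> b" "a \<in> V" "b \<in> V"
    using assms(2) unfolding graph_on_def by force
  then have "?P [a, b]" unfolding is_path_def adj_def by auto
  moreover have "length vs < Suc (card V)" if "?P vs" for vs
    using that is_path_length_le_card[OF _ _ assms(1)] by (meson le_imp_less_Suc)
  ultimately obtain ps where ps: "?P ps" and longest: "\<And>vs. ?P vs \<Longrightarrow> length vs \<le> length ps"
    using ex_has_greatest_nat[of ?P _ length] by blast
  have "length ps \<ge> 2" using longest[OF \<open>?P [a, b]\<close>] by simp
  moreover have "ps \<noteq> []" using \<open>length ps \<ge> 2\<close> by auto
  ultimately have "length ps - 2 + 1 < length ps" "ps ! (length ps - 2 + 1) = last ps"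
    by (auto simp: last_conv_nth numeral_2_eq_2 Suc_diff_Suc)
  then have "adj E (ps ! (length ps - 2)) (last ps)"
    using ps unfolding is_path_def by metis
  then show thesis
    using that adj_sym longest_path_last_adj[OF assms(2,4) _ _ \<open>length ps \<ge> 2\<close>] ps longest
    by blast
qed

locale leaf_edge =
  fixes V :: "nat set" and E :: "nat set set" and v u :: nat
  assumes graph: "graph_on V E"
    and adj_leaf: "adj E v u"
    and leaf_unique: "\<And>w. adj E v w \<Longrightarrow> w = u"
begin

lemma adj_without_leaf: "adj E x y \<Longrightarrow> x \<noteq> v \<Longrightarrow> y \<noteq> v \<Longrightarrow> adj (E - {{u, v}}) x y"
  unfolding adj_def by (auto simp: doubleton_eq_iff)

lemma graph_on_remove_leaf: "graph_on (V - {v}) (E - {{u, v}})"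
  unfolding graph_on_def
proof
  fix e assume e: "e \<in> E - {{u, v}}"
  then obtain i j where ij: "e = {i, j}" "i \<noteq> j" "i \<in> V" "j \<in> V"
    using graph unfolding graph_on_def by blast
  have off_leaf: "x \<noteq> v" if "{x, y} \<in> E - {{u, v}}" "x \<noteq> y" for x y
  proof
    assume "x = v"
    then have "adj E v y" using that unfolding adj_def by auto
    then have "y = u" by (rule leaf_unique)
    then show False using that \<open>x = v\<close> by (auto simp: insert_commute)
  qed
  have "i \<noteq> v" "j \<noteq> v"
    using off_leaf[of i j] off_leaf[of j i] e ij by (auto simp: insert_commute)
  then show "\<exists>i j. e = {i, j} \<and> i \<noteq> j \<and> i \<in> V - {v} \<and> j \<in> V - {v}"
    using ij by blast
qed

text \<open>A walk from a vertex other than the leaf reaches the leaf only through its neighbour,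
  so every vertex it visits before or after is reachable without the leaf edge.\<close>
lemma reach_remove_leaf:
  assumes "(i, b) \<in> {(x, y). adj E x y}\<^sup>*" "i \<noteq> v"
  shows "(i, if b = v then u else b) \<in> {(x, y). adj (E - {{u, v}}) x y}\<^sup>*"
  using assms(1)
proof (induction rule: rtrancl_induct)
  case base
  then show ?case using assms(2) by simp
next
  case (step b b')
  then have bb': "adj E b b'" by simp
  consider "b = v" | "b' = v" | "b \<noteq> v" "b' \<noteq> v" by blast
  then show ?case
  proof cases
    case 1
    then have "b' = u" using leaf_unique bb' by blast
    then show ?thesis using step.IH 1 adj_leaf unfolding adj_def by auto
  next
    case 2
    then have "b = u" using leaf_unique adj_sym[OF bb'] by blast
    then show ?thesis using step.IH 2 adj_leaf unfolding adj_def by auto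
  next
    case 3
    then show ?thesis
      using step.IH adj_without_leaf[OF bb'] by (simp add: rtrancl.rtrancl_into_rtrancl)
  qed
qed

lemma connected_on_remove_leaf:
  assumes "connected_on V E"
  shows "connected_on (V - {v}) (E - {{u, v}})"
  unfolding connected_on_def
proof (intro ballI)
  fix i j assume "i \<in> V - {v}" "j \<in> V - {v}"
  then show "(i, j) \<in> {(x, y). adj (E - {{u, v}}) x y}\<^sup>*"
    using reach_remove_leaf[of i j] assms unfolding connected_on_def by auto
qed

end

lemma finite_edges_graph_on: "finite V \<Longrightarrow> graph_on V E \<Longrightarrow> finite E"
  unfolding graph_on_def by (rule finite_subset[of E "Pow V"]) auto

lemma card_edges_tree_on:
  assumes "finite V" "V \<noteq> {}" "graph_on V E" "connected_on V E" "\<not> has_cycle_on V E"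
  shows "card E = card V - 1"
  using assms
proof (induction "card V" arbitrary: V E)
  case 0
  then show ?case by simp
next
  case (Suc m)
  show ?case
  proof (cases "E = {}")
    case True
    have "i = j" if "i \<in> V" "j \<in> V" for i j
    proof -
      have "(i, j) \<in> {(a, b). adj E a b}\<^sup>*" using Suc.prems(4) that unfolding connected_on_def by blast
      then show "i = j" using True by (auto simp: adj_def elim: rtranclE)
    qed
    then have "card V \<le> Suc 0" using card_le_Suc0_iff_eq[OF Suc.prems(1)] by blast
    then show ?thesis using True by simp
  next
    case False
    obtain v u where "adj E v u" "\<And>w. adj E v w \<Longrightarrow> w = u"
      using acyclic_has_leaf[OF Suc.prems(1,3) False Suc.prems(5)] by metis
    then interpret leaf_edge V E v u using Suc.prems(3) by unfold_locales
    have "v \<in> V" "u \<in> V" "u \<noteq> v" "{u, v} \<in> E"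
      using graph_on_adjD[OF graph adj_leaf] adj_leaf unfolding adj_def by (auto simp: insert_commute)
    have "card (V - {v}) = m" using Suc.hyps(2) \<open>v \<in> V\<close> Suc.prems(1) by simp
    have "V - {v} \<noteq> {}" using \<open>u \<in> V\<close> \<open>u \<noteq> v\<close> by blast
    have "card (E - {{u, v}}) = card (V - {v}) - 1"
    proof (rule Suc.hyps(1))
      show "finite (V - {v})" using Suc.prems(1) by simp
      show "graph_on (V - {v}) (E - {{u, v}})" by (rule graph_on_remove_leaf)
      show "connected_on (V - {v}) (E - {{u, v}})" using Suc.prems(4) by (rule connected_on_remove_leaf)
      show "\<not> has_cycle_on (V - {v}) (E - {{u, v}})"
        using Suc.prems(5) has_cycle_on_mono by blast
    qed (use \<open>card (V - {v}) = m\<close> \<open>V - {v} \<noteq> {}\<close> in simp_all)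
    moreover have "card E = Suc (card (E - {{u, v}}))"
      using finite_edges_graph_on[OF Suc.prems(1,3)] \<open>{u, v} \<in> E\<close> by (rule card.remove)
    moreover have "m \<noteq> 0" using \<open>card (V - {v}) = m\<close> \<open>V - {v} \<noteq> {}\<close> Suc.prems(1) by auto
    ultimately show ?thesis using \<open>card (V - {v}) = m\<close> Suc.hyps(2) by simp
  qed
qed

lemma card_edges_tree: "is_tree n E \<Longrightarrow> card E = n - 1"
  using card_edges_tree_on[of "{1..n}" E]
  unfolding is_tree_def simple_graph_iff_graph_on graph_connected_iff_connected_on
    has_cycle_iff_has_cycle_on by simp

section \<open>Proper colourings with two colours\<close>

lemma content_add_eq_iff:
  assumes "a \<noteq> b"
  shows "content n c a + content n c b = n \<longleftrightarrow> (\<forall>i\<in>{1..n}. c i \<in> {a, b})"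
proof -
  let ?S = "\<lambda>x. {i \<in> {1..n}. c i = x}"
  have "card (?S a \<union> ?S b) = content n c a + content n c b"
    unfolding content_def using assms by (intro card_Un_disjoint) auto
  moreover have "card (?S a \<union> ?S b) = n \<longleftrightarrow> ?S a \<union> ?S b = {1..n}"
  proof
    have "?S a \<union> ?S b \<subseteq> {1..n}" by blast
    then show "card (?S a \<union> ?S b) = n \<Longrightarrow> ?S a \<union> ?S b = {1..n}"
      by (intro card_subset_eq) simp_all
  qed simp
  ultimately have "content n c a + content n c b = n \<longleftrightarrow> ?S a \<union> ?S b = {1..n}"
    by simp
  then show ?thesis by blast
qed

lemma proper_coloring_adj_neq: "proper_coloring n E c \<Longrightarrow> adj E i j \<Longrightarrow> c i \<noteq> c j"
  unfolding proper_coloring_def by blast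

lemma two_colorings_agree_or_differ:
  assumes "graph_connected n E" "simple_graph n E"
    and "proper_coloring n E c" "proper_coloring n E c'"
    and "\<forall>k\<in>{1..n}. c k \<in> {a, b}" "\<forall>k\<in>{1..n}. c' k \<in> {a, b}"
    and "i \<in> {1..n}" "j \<in> {1..n}"
  shows "c j = c' j \<longleftrightarrow> c i = c' i"
proof -
  have "(i, j) \<in> {(k, l). adj E k l}\<^sup>*"
    using assms(1,7,8) unfolding graph_connected_def by blast
  then show ?thesis
  proof (induction rule: rtrancl_induct)
    case (step k l)
    then have kl: "adj E k l" by simp
    then have "k \<in> {1..n}" "l \<in> {1..n}"
      using graph_on_adjD assms(2) unfolding simple_graph_iff_graph_on by blast+
    then have "c k \<in> {a, b}" "c l \<in> {a, b}" "c' k \<in> {a, b}" "c' l \<in> {a, b}"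
      using assms(5,6) by blast+
    moreover have "c k \<noteq> c l" "c' k \<noteq> c' l"
      using kl assms(3,4) proper_coloring_adj_neq by blast+
    ultimately have "c l = c' l \<longleftrightarrow> c k = c' k" by (smt (verit) insertE singletonD)
    then show ?case using step.IH by simp
  qed simp
qed

lemma proper_coloring_unique_by_content:
  assumes "graph_connected n E" "simple_graph n E"
    and "proper_coloring n E c0" "\<forall>k\<in>{1..n}. c0 k \<in> {a, b}"
    and "content n c0 a \<noteq> content n c0 b"
    and "proper_coloring n E c" "content n c = content n c0"
  shows "c = c0"
proof (rule ccontr)
  assume "c \<noteq> c0"
  have "a \<noteq> b" using assms(5) by blast
  then have colors: "\<forall>k\<in>{1..n}. c k \<in> {a, b}"
    using assms(4,7) content_add_eq_iff by metis
  obtain i where "i \<in> {1..n}" "c i \<noteq> c0 i"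
    using \<open>c \<noteq> c0\<close> assms(3,6) PiE_ext unfolding proper_coloring_def by metis
  then have "c j \<noteq> c0 j" if "j \<in> {1..n}" for j
    using two_colorings_agree_or_differ[OF assms(1,2,6,3) colors assms(4) _ that] by blast
  then have "{k \<in> {1..n}. c k = a} = {k \<in> {1..n}. c0 k = b}"
    using colors assms(4) \<open>a \<noteq> b\<close> by fastforce
  then have "content n c a = content n c0 b" unfolding content_def by simp
  then show False using assms(5,7) by simp
qed

lemma cqf_coeff_unique_coloring:
  assumes "proper_coloring n E c0"
    and "\<And>c. proper_coloring n E c \<Longrightarrow> content n c = content n c0 \<Longrightarrow> c = c0"
  shows "cqf_coeff n E k (content n c0) = (if k = asc E c0 then 1 else 0)"
proof -
  have "{c. proper_coloring n E c \<and> asc E c = k \<and> content n c = content n c0}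
      = (if k = asc E c0 then {c0} else {})"
    using assms by auto
  then show ?thesis unfolding cqf_coeff_def by simp
qed

lemma card_oriented_edges:
  assumes "graph_on V E"
  shows "card {(i, j). {i, j} \<in> E \<and> i < j} = card E"
proof (rule bij_betw_same_card)
  show "bij_betw (\<lambda>(i, j). {i, j}) {(i, j). {i, j} \<in> E \<and> i < j} E"
  proof (rule bij_betwI')
    fix e assume "e \<in> E"
    then obtain i j where ij: "e = {i, j}" "i < j" using assms unfolding graph_on_def
      by (metis insert_commute linorder_neq_iff)
    show "\<exists>x\<in>{(i, j). {i, j} \<in> E \<and> i < j}. e = (case x of (i, j) \<Rightarrow> {i, j})"
      using \<open>e \<in> E\<close> ij by (intro bexI[of _ "(i, j)"]) simp_all
  next
    fix x y assume "x \<in> {(i, j). {i, j} \<in> E \<and> i < j}" "y \<in> {(i, j). {i, j} \<in> E \<and> i < j}"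
    then show "((case x of (i, j) \<Rightarrow> {i, j}) = (case y of (i, j) \<Rightarrow> {i, j})) = (x = y)"
      by (cases x; cases y) (auto simp: doubleton_eq_iff)
  qed auto
qed

text \<open>If c' reverses the order of the colours along every edge, every edge is an ascent of
  exactly one of c and c'.\<close>
lemma asc_add_asc_reversed:
  assumes "finite V" "graph_on V E"
    and "\<And>i j. adj E i j \<Longrightarrow> c i \<noteq> c j"
    and "\<And>i j. adj E i j \<Longrightarrow> c' i < c' j \<longleftrightarrow> c j < c i"
  shows "asc E c + asc E c' = card E"
proof -
  let ?P = "{(i, j). {i, j} \<in> E \<and> i < j}"
  let ?Q = "{(i, j). {i, j} \<in> E \<and> i < j \<and> c i < c j}"
  let ?Q' = "{(i, j). {i, j} \<in> E \<and> i < j \<and> c' i < c' j}"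
  have adj_P: "adj E i j" if "(i, j) \<in> ?P" for i j
    using that unfolding adj_def by auto
  have flip: "c' i < c' j \<longleftrightarrow> \<not> c i < c j" if "(i, j) \<in> ?P" for i j
    using assms(3,4)[OF adj_P[OF that]] by (meson linorder_neq_iff order.asym)
  have "?P \<subseteq> V \<times> V" using graph_on_adjD[OF assms(2)] adj_P by blast
  then have "finite ?P" using assms(1) finite_subset by blast
  then have "finite ?Q" "finite ?Q'" by (auto elim: rev_finite_subset)
  moreover have "?Q \<inter> ?Q' = {}" using flip by auto
  ultimately have "card ?Q + card ?Q' = card (?Q \<union> ?Q')" by (simp add: card_Un_disjoint)
  also have "?Q \<union> ?Q' = ?P" using flip by auto
  finally have "card ?Q + card ?Q' = card ?P" .
  then show ?thesis using card_oriented_edges[OF assms(2)] unfolding asc_def by simp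
qed

section \<open>The two-colourings of a bipartite tree\<close>

definition bipartition :: "nat \<Rightarrow> nat set set \<Rightarrow> nat set \<Rightarrow> nat set \<Rightarrow> bool" where
  "bipartition n E A B \<longleftrightarrow>
     A \<union> B = {1..n} \<and> A \<inter> B = {} \<and> independent_set E A \<and> independent_set E B"

text \<open>The value off A \<union> B is undefined, as proper_coloring requires of an extensional colouring.\<close>
definition two_coloring :: "nat set \<Rightarrow> nat set \<Rightarrow> nat \<Rightarrow> nat" where
  "two_coloring A B i = (if i \<in> A then 1 else if i \<in> B then 2 else undefined)"

lemma bipartition_swap: "bipartition n E A B \<Longrightarrow> bipartition n E B A"
  unfolding bipartition_def by blast

lemma bipartition_adjD:
  assumes "bipartition n E A B" "simple_graph n E" "adj E i j"
  shows "i \<in> A \<and> j \<in> B \<or> i \<in> B \<and> j \<in> A"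
proof -
  have "i \<in> A \<union> B" "j \<in> A \<union> B"
    using assms graph_on_adjD unfolding bipartition_def simple_graph_iff_graph_on by blast+
  moreover have "\<not> (i \<in> A \<and> j \<in> A)" "\<not> (i \<in> B \<and> j \<in> B)"
    using assms(1,3) unfolding bipartition_def independent_set_def by blast+
  ultimately show ?thesis by blast
qed

lemma proper_coloring_two_coloring:
  assumes "bipartition n E A B" "simple_graph n E"
  shows "proper_coloring n E (two_coloring A B)"
  unfolding proper_coloring_def
proof
  show "two_coloring A B \<in> {1..n} \<rightarrow>\<^sub>E {1..}"
    using assms(1) unfolding bipartition_def two_coloring_def by (auto simp: PiE_def extensional_def)
  show "\<forall>i j. adj E i j \<longrightarrow> two_coloring A B i \<noteq> two_coloring A B j"
  proof (intro allI impI)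
    fix i j assume "adj E i j"
    then have "i \<in> A \<and> j \<in> B \<or> i \<in> B \<and> j \<in> A" by (rule bipartition_adjD[OF assms])
    moreover have "A \<inter> B = {}" using assms(1) unfolding bipartition_def by blast
    ultimately show "two_coloring A B i \<noteq> two_coloring A B j" unfolding two_coloring_def by auto
  qed
qed

lemma content_two_coloring:
  assumes "bipartition n E A B"
  shows "content n (two_coloring A B) = (\<lambda>a. if a = 1 then card A else if a = 2 then card B else 0)"
proof
  fix a
  have "{i \<in> {1..n}. two_coloring A B i = a} = (if a = 1 then A else if a = 2 then B else {})"
    using assms unfolding bipartition_def two_coloring_def by auto
  then show "content n (two_coloring A B) a = (if a = 1 then card A else if a = 2 then card B else 0)"
    unfolding content_def by simp
qed

lemma cqf_coeff_two_coloring: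
  assumes "graph_connected n E" "simple_graph n E" "bipartition n E A B" "card A \<noteq> card B"
  shows "cqf_coeff n E k (content n (two_coloring A B)) =
    (if k = asc E (two_coloring A B) then 1 else 0)"
proof (rule cqf_coeff_unique_coloring)
  show "proper_coloring n E (two_coloring A B)" using assms(3,2) by (rule proper_coloring_two_coloring)
  have "\<forall>k\<in>{1..n}. two_coloring A B k \<in> {1, 2}"
    using assms(3) unfolding bipartition_def two_coloring_def by auto
  moreover have "content n (two_coloring A B) 1 \<noteq> content n (two_coloring A B) 2"
    using content_two_coloring[OF assms(3)] assms(4) by simp
  ultimately show "c = two_coloring A B"
    if "proper_coloring n E c" "content n c = content n (two_coloring A B)" for c
    using proper_coloring_unique_by_content assms(1,2) \<open>proper_coloring n E (two_coloring A B)\<close> that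
    by blast
qed

lemma asc_two_coloring_add_swap:
  assumes "simple_graph n E" "bipartition n E A B"
  shows "asc E (two_coloring A B) + asc E (two_coloring B A) = card E"
proof (rule asc_add_asc_reversed)
  show "graph_on {1..n} E" using assms(1) unfolding simple_graph_iff_graph_on .
  fix i j assume "adj E i j"
  then have "i \<in> A \<and> j \<in> B \<or> i \<in> B \<and> j \<in> A" "A \<inter> B = {}"
    using bipartition_adjD[OF assms(2,1)] assms(2) unfolding bipartition_def by blast+
  then show "two_coloring A B i \<noteq> two_coloring A B j"
    "two_coloring B A i < two_coloring B A j \<longleftrightarrow> two_coloring A B j < two_coloring A B i"
    unfolding two_coloring_def by auto
qed simp

lemma not_cqf_palindromic_if_monomial:
  assumes "\<And>k. cqf_coeff n E k \<alpha> = (if k = d then 1 else 0)" "d \<le> card E" "2 * d \<noteq> card E"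
  shows "\<not> cqf_palindromic n E"
proof
  assume "cqf_palindromic n E"
  then have "cqf_coeff n E d \<alpha> = cqf_coeff n E (card E - d) \<alpha>"
    unfolding cqf_palindromic_def using assms(2) by blast
  moreover have "card E - d \<noteq> d" using assms(2,3) by linarith
  ultimately show False using assms(1) by simp
qed

lemma not_cqf_symmetric_if_monomials:
  assumes "\<And>k. cqf_coeff n E k \<alpha> = (if k = d then 1 else 0)"
    and "\<And>k. cqf_coeff n E k (\<alpha> \<circ> \<sigma>) = (if k = d' then 1 else 0)"
    and "d \<noteq> d'" "bij \<sigma>" "\<sigma> 0 = 0"
  shows "\<not> cqf_symmetric n E"
proof
  assume "cqf_symmetric n E"
  then have "cqf_coeff n E d' (\<alpha> \<circ> \<sigma>) = cqf_coeff n E d' \<alpha>"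
    unfolding cqf_symmetric_def using assms(4,5) by blast
  then show False using assms(1-3) by simp
qed

theorem corollary5p4:
  fixes n :: nat and E :: "nat set set" and A B :: "nat set"
  assumes "is_tree n E"
    and "even n"
    and "A \<union> B = {1..n}" and "A \<inter> B = {}"
    and "independent_set E A" and "independent_set E B"
    and "card A \<noteq> card B"
  shows "\<not> cqf_palindromic n E \<and> \<not> cqf_symmetric n E"
proof -
  let ?c = "two_coloring A B" and ?c' = "two_coloring B A"
  have tree: "simple_graph n E" "graph_connected n E" "n \<ge> 1"
    using assms(1) unfolding is_tree_def by auto
  have AB: "bipartition n E A B" using assms(3-6) unfolding bipartition_def by blast
  have coeff: "\<And>k. cqf_coeff n E k (content n ?c) = (if k = asc E ?c then 1 else 0)"
    using cqf_coeff_two_coloring[OF tree(2,1) AB assms(7)] .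
  have coeff': "\<And>k. cqf_coeff n E k (content n ?c') = (if k = asc E ?c' then 1 else 0)"
    using cqf_coeff_two_coloring[OF tree(2,1) bipartition_swap[OF AB]] assms(7) by simp
  have asc: "asc E ?c + asc E ?c' = card E"
    using asc_two_coloring_add_swap[OF tree(1) AB] .
  have "odd (card E)" using card_edges_tree[OF assms(1)] assms(2) tree(3) by simp
  then have "2 * asc E ?c \<noteq> card E" "asc E ?c \<noteq> asc E ?c'" using asc by presburger+
  have "content n ?c \<circ> transpose 1 2 = content n ?c'"
    using content_two_coloring[OF AB] content_two_coloring[OF bipartition_swap[OF AB]]
    by (auto simp: transpose_def)
  show ?thesis
  proof (intro conjI)
    show "\<not> cqf_palindromic n E"
      using \<open>2 * asc E ?c \<noteq> card E\<close> asc
      by (intro not_cqf_palindromic_if_monomial[OF coeff]) auto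
    show "\<not> cqf_symmetric n E"
      using \<open>content n ?c \<circ> transpose 1 2 = content n ?c'\<close> \<open>asc E ?c \<noteq> asc E ?c'\<close> coeff'
      by (intro not_cqf_symmetric_if_monomials[OF coeff, where \<sigma> = "transpose 1 2"
            and d' = "asc E ?c'"]) simp_all
  qed
qed

end
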